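(* If $p$ is an odd prime then $\mathcal{D}_p\sim(1-A_p^2)^{\frac{p-3}{2}}$; if $p$ is twice an odd prime then $\mathcal{D}_p\sim\sqrt2\,(1+\alpha_p^4)^{\frac{p/2-3}{2}}$.
   Context: $\alpha_p=e^{2\pi i/(4p)}$, $A_p=\alpha_p^2$; $k_p=\mathbb{Z}[A_p,1/p]$ if $p\equiv-1\pmod 4$, $\mathbb{Z}[\alpha_p,1/p]$ if $p\equiv1,2\pmod4$; $\mathcal{O}_p$ its ring of integers. $\mathcal{D}_p=\langle S^3_\flat\rangle_p^{-1}$ where $\langle\ \rangle_p$ is the Blanchet–Habegger–Masbaum–Vogel quantum invariant at $A=A_p$ and $S^3_\flat$ is $S^3$ with weight $0$. For $a,b\in\mathcal{O}_p$ (or nonzero elements of its fraction field), $a\sim b$ means $a/b$ is a unit of $\mathcal{O}_p$. *)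

theory Defs
  imports Complex_Main "HOL-Computational_Algebra.Polynomial"
begin

definition alpha_p :: "nat \<Rightarrow> complex" where
  "alpha_p p = cis (2 * pi / (4 * real p))"

definition A_p :: "nat \<Rightarrow> complex" where
  "A_p p = (alpha_p p)^2"

definition gen_p :: "nat \<Rightarrow> complex" where
  "gen_p p = (if p mod 4 = 3 then A_p p else alpha_p p)"

text \<open>The number field Q(z) = Q[z] for algebraic z.\<close>
definition rat_field_gen :: "complex \<Rightarrow> complex set" where
  "rat_field_gen z = {poly (map_poly of_rat q) z | q. True}"

definition algebraic_integer :: "complex \<Rightarrow> bool" where
  "algebraic_integer x \<longleftrightarrow>
     (\<exists>q :: int poly. lead_coeff q = 1 \<and> poly (map_poly of_int q) x = 0)"

definition O_p :: "nat \<Rightarrow> complex set" where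
  "O_p p = {x \<in> rat_field_gen (gen_p p). algebraic_integer x}"

definition assoc_p :: "nat \<Rightarrow> complex \<Rightarrow> complex \<Rightarrow> bool" where
  "assoc_p p a b \<longleftrightarrow> a \<noteq> 0 \<and> b \<noteq> 0 \<and> a / b \<in> O_p p \<and> b / a \<in> O_p p"

definition qint :: "nat \<Rightarrow> nat \<Rightarrow> complex" where
  "qint p n = ((A_p p)^(2*n) - (inverse (A_p p))^(2*n)) / ((A_p p)^2 - (inverse (A_p p))^2)"

definition bracket_e :: "nat \<Rightarrow> nat \<Rightarrow> complex" where
  "bracket_e p i = (-1)^i * qint p (i + 1)"

definition colours :: "nat \<Rightarrow> nat set" where
  "colours p = (if odd p then {i. i \<le> p - 3 \<and> even i} else {0 .. p div 2 - 2})"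

text \<open>D_p^2 = eta^{-2} = sum over colours of <e_i>^2, where <S^3_flat>_p = eta.\<close>
definition D_sq :: "nat \<Rightarrow> complex" where
  "D_sq p = (\<Sum>i\<in>colours p. (bracket_e p i)^2)"

end

theory Submission
  imports Defs "Jordan_Normal_Form.Char_Poly" "HOL-Library.Real_Mod"
begin

text \<open>
  Put z = A_p^2 = alpha_p^4, a primitive p-th root of unity. The sum over the colours of the squared
  quantum integers is a sum of (z^n - z^-n)^2 over half of the residues mod p, which gives
  D^2 = -p / (z - z^-1)^2; for p = 2q the same computation with the primitive q-th root w = -z gives
  D^2 = -2q / (w - w^-1)^2.

  For a primitive q-th root of unity w, q = 2h + 1 prime, q is the product of the 1 - w^k, 0 < k < q.
  Pairing k with q - k and writing 1 - w^k as (1 - w) times a cyclotomic unit shows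
  -q / ((w - w^-1)^2 (1 - w)^(q - 3)) = (-1)^(h + 1) u^2 for a unit u, and the sign is the square of
  a unit of k_p. Hence D / X is a unit for the stated X. All these units lie in the ring Z[g] spanned
  by the powers of the root of unity g generating k_p; its elements are algebraic integers in Q(g),
  so they lie in O_p.
\<close>

section \<open>Roots of unity\<close>

lemma cis_2pi_div_power_eq_1_iff:
  assumes "n > 0"
  shows "cis (2 * pi / real n) ^ k = 1 \<longleftrightarrow> n dvd k"
proof -
  have "cis (2 * pi / real n) ^ k = 1 \<longleftrightarrow> (\<exists>m::int. real k * (2 * pi / real n) = of_int m * (2 * pi))"
    by (simp add: DeMoivre cis_eq_1_iff)
  also have "\<dots> \<longleftrightarrow> (\<exists>m::int. int k = m * int n)"
    using assms by (auto simp: field_simps) (metis of_int_eq_iff of_int_mult of_int_of_nat_eq)+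
  also have "\<dots> \<longleftrightarrow> n dvd k"
    by (metis dvd_def int_dvd_int_iff mult.commute)
  finally show ?thesis .
qed

lemma prod_linear_factors_dvd:
  fixes p :: "'a::idom poly" and a :: "nat \<Rightarrow> 'a"
  assumes "\<And>k. k < m \<Longrightarrow> poly p (a k) = 0" and "inj_on a {..<m}"
  shows "(\<Prod>k<m. [:- a k, 1:]) dvd p"
  using assms
proof (induction m)
  case 0
  then show ?case
    by simp
next
  case (Suc m)
  have "inj_on a {..<m}"
    using Suc.prems(2) by (rule inj_on_subset) auto
  then obtain Q where Q: "p = (\<Prod>k<m. [:- a k, 1:]) * Q"
    using Suc by (auto elim: dvdE)
  have "a m \<noteq> a k" if "k < m" for k
  proof
    assume "a m = a k"
    with Suc.prems(2) have "m = k"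
      by (rule inj_onD) (use that in auto)
    with that show False
      by simp
  qed
  then have "poly (\<Prod>k<m. [:- a k, 1:]) (a m) \<noteq> 0"
    by (simp add: poly_prod)
  moreover have "poly p (a m) = 0"
    using Suc.prems(1) by simp
  ultimately have "[:- a m, 1:] dvd Q"
    using Q by (simp add: poly_eq_0_iff_dvd)
  then show ?case
    unfolding Q prod.lessThan_Suc by (rule mult_dvd_mono[OF dvd_refl])
qed

lemma monic_dvd_eq_if_degree_eq:
  fixes p q :: "'a::idom poly"
  assumes "p dvd q" and "lead_coeff p = 1" "lead_coeff q = 1" and "degree p = degree q"
  shows "p = q"
proof -
  obtain r where r: "q = p * r"
    using assms(1) by (rule dvdE)
  have "q \<noteq> 0"
    using assms(3) by auto
  then have "degree q = degree p + degree r"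
    unfolding r by (simp add: degree_mult_eq)
  then have "degree r = 0"
    using assms(4) by simp
  moreover have "lead_coeff r = 1"
    using assms(2,3) unfolding r by (simp add: lead_coeff_mult)
  ultimately have "r = 1"
    by (metis degree_0_id one_pCons)
  then show ?thesis
    using r by simp
qed

lemma prod_linear_factors_primitive_root:
  fixes w :: complex
  assumes n: "n > 0" and w: "w ^ n = 1" and prim: "\<And>k. 0 < k \<Longrightarrow> k < n \<Longrightarrow> w ^ k \<noteq> 1"
  shows "(\<Prod>k<n. [:- (w ^ k), 1:]) = monom 1 n - 1"
proof (rule monic_dvd_eq_if_degree_eq)
  have "w \<noteq> 0"
    using w n by (auto simp: zero_power)
  have "w ^ j \<noteq> w ^ k" if "j < k" "k < n" for j k
  proof
    assume eq: "w ^ j = w ^ k"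
    have "w ^ (k - j) * w ^ j = w ^ k"
      using that by (simp flip: power_add)
    then have "w ^ (k - j) * w ^ j = 1 * w ^ j"
      using eq by simp
    then show False
      using prim[of "k - j"] that \<open>w \<noteq> 0\<close> by simp
  qed
  then have "inj_on (\<lambda>k. w ^ k) {..<n}"
    by (metis (no_types, lifting) inj_onI lessThan_iff linorder_neqE_nat)
  moreover have "poly (monom 1 n - 1) (w ^ k) = 0" for k
  proof -
    have "(w ^ k) ^ n = (w ^ n) ^ k"
      by (simp flip: power_mult add: mult.commute)
    then show ?thesis
      using w by (simp add: poly_monom)
  qed
  ultimately show "(\<Prod>k<n. [:- (w ^ k), 1:]) dvd monom 1 n - 1"
    by (intro prod_linear_factors_dvd)
  have "degree (monom 1 n - 1 :: complex poly) = n"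
    using n unfolding diff_conv_add_uminus by (subst degree_add_eq_left) (auto simp: degree_monom_eq)
  then show "lead_coeff (monom 1 n - 1 :: complex poly) = 1"
    using n by (simp add: coeff_monom)
  show "lead_coeff (\<Prod>k<n. [:- (w ^ k), 1:]) = 1"
    by (simp add: lead_coeff_prod)
  show "degree (\<Prod>k<n. [:- (w ^ k), 1:]) = degree (monom 1 n - 1 :: complex poly)"
    unfolding \<open>degree (monom 1 n - 1 :: complex poly) = n\<close>
    by (subst degree_prod_eq_sum_degree) auto
qed

lemma prod_one_minus_primitive_root_powers:
  fixes w :: complex
  assumes n: "n > 0" and w: "w ^ n = 1" and prim: "\<And>k. 0 < k \<Longrightarrow> k < n \<Longrightarrow> w ^ k \<noteq> 1"
  shows "(\<Prod>k\<in>{1..<n}. 1 - w ^ k) = of_nat n"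
proof -
  define H where "H = (\<Prod>k\<in>{1..<n}. [:- (w ^ k), 1:])"
  have "{..<n} = insert 0 {1..<n}"
    using n by auto
  then have "monom 1 n - 1 = (\<Prod>k\<in>insert 0 {1..<n}. [:- (w ^ k), 1:])"
    using prod_linear_factors_primitive_root[OF n w prim] by simp
  also have "\<dots> = [:-1, 1:] * H"
    by (simp add: H_def)
  finally have factor: "monom 1 n - 1 = [:-1, 1:] * H" .
  have "of_nat n = poly (pderiv (monom 1 n - 1)) (1 :: complex)"
    by (simp add: pderiv_diff pderiv_monom poly_monom)
  also have "pderiv (monom 1 n - 1) = [:-1, 1:] * pderiv H + H"
    unfolding factor pderiv_mult by (simp del: mult_pCons_left add: pderiv_pCons)
  finally show ?thesis
    by (simp add: H_def poly_prod)
qed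

lemma of_nat_eq_prod_one_minus_roots_square:
  fixes w :: complex
  assumes q: "q = 2 * h + 1" and w: "w ^ q = 1" and prim: "\<And>k. 0 < k \<Longrightarrow> k < q \<Longrightarrow> w ^ k \<noteq> 1"
  shows "of_nat q = (-1) ^ h * (\<Prod>k\<in>{1..h}. 1 - w ^ k) ^ 2 / (\<Prod>k\<in>{1..h}. w ^ k)"
proof -
  have w0: "w \<noteq> 0"
    using w q by (auto simp: zero_power)
  have reflect: "1 - w ^ (q - k) = (-1) * (1 - w ^ k) / w ^ k" if "k \<le> q" for k
  proof -
    have "w ^ (q - k) * w ^ k = 1"
      using that w by (simp flip: power_add)
    then have "w ^ (q - k) = 1 / w ^ k"
      using w0 by (simp add: field_simps)
    then show ?thesis
      using w0 by (simp add: field_simps)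
  qed
  have upper: "(\<Prod>k\<in>{h+1..h+h}. 1 - w ^ k) = (-1) ^ h * (\<Prod>k\<in>{1..h}. 1 - w ^ k) / (\<Prod>k\<in>{1..h}. w ^ k)"
  proof -
    have "(\<Prod>k\<in>{h+1..h+h}. 1 - w ^ k) = (\<Prod>k\<in>{1..h}. 1 - w ^ (q - k))"
      by (rule prod.reindex_bij_witness[of _ "\<lambda>k. q - k" "\<lambda>k. q - k"]) (use q in auto)
    also have "\<dots> = (\<Prod>k\<in>{1..h}. (-1) * (1 - w ^ k) / w ^ k)"
      by (rule prod.cong) (use q reflect in auto)
    also have "\<dots> = (\<Prod>k\<in>{1..h}. (-1::complex)) * (\<Prod>k\<in>{1..h}. 1 - w ^ k) / (\<Prod>k\<in>{1..h}. w ^ k)"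
      by (simp only: prod.distrib prod_dividef)
    finally show ?thesis
      by simp
  qed
  have "{1..<q} = {1..h+h}"
    using q by auto
  then have "of_nat q = (\<Prod>k\<in>{1..h+h}. 1 - w ^ k)"
    using prod_one_minus_primitive_root_powers[OF _ w prim] q by simp
  also have "\<dots> = (\<Prod>k\<in>{1..h}. 1 - w ^ k) * (\<Prod>k\<in>{h+1..h+h}. 1 - w ^ k)"
    by (rule prod.ub_add_nat) simp
  finally show ?thesis
    unfolding upper by (simp add: power2_eq_square)
qed

lemma sum_square_power_diff_inverse:
  fixes z :: complex
  assumes z: "z ^ m = 1" and z2: "z ^ 2 \<noteq> 1" and m: "m > 0"
  shows "(\<Sum>n<m. (z ^ n - inverse z ^ n) ^ 2) = - 2 * of_nat m"
proof -
  have z0: "z \<noteq> 0"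
    using z m by (auto simp: zero_power)
  have expand: "(z ^ n - inverse z ^ n) ^ 2 = (z ^ 2) ^ n + (inverse z ^ 2) ^ n - 2" for n
  proof -
    have "(z ^ 2) ^ n = (z ^ n) ^ 2" "(inverse z ^ 2) ^ n = (inverse z ^ n) ^ 2"
      by (simp_all flip: power_mult add: mult.commute)
    moreover have "z ^ n * inverse z ^ n = 1"
      using z0 by (simp add: power_inverse)
    ultimately show ?thesis
      by (simp add: power2_eq_square algebra_simps)
  qed
  have "(z ^ 2) ^ m = 1"
    using z by (metis mult.commute power_mult power_one)
  moreover have "(inverse z ^ 2) ^ m = 1"
    using \<open>(z ^ 2) ^ m = 1\<close> by (simp add: power_inverse)
  moreover have "inverse z ^ 2 \<noteq> 1"
    using z2 by (simp add: power_inverse)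
  ultimately have "(\<Sum>n<m. (z ^ 2) ^ n) = 0" and "(\<Sum>n<m. (inverse z ^ 2) ^ n) = 0"
    using z2 by (simp_all add: sum_gp_strict)
  then show ?thesis
    unfolding expand by (simp add: sum.distrib sum_subtractf)
qed

lemma square_power_diff_inverse_reflect:
  fixes z :: complex
  assumes z: "z ^ m = 1" and "n \<le> m"
  shows "(z ^ (m - n) - inverse z ^ (m - n)) ^ 2 = (z ^ n - inverse z ^ n) ^ 2"
proof (cases "z = 0")
  case False
  have "z ^ (m - n) * z ^ n = 1"
    using assms by (simp flip: power_add)
  then have "z ^ (m - n) = inverse z ^ n"
    using False by (simp add: field_simps power_inverse)
  moreover from this have "inverse z ^ (m - n) = z ^ n"
    by (simp add: power_inverse)
  ultimately show ?thesis
    by (simp add: power2_commute)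
qed (use assms in \<open>auto simp: zero_power\<close>)

lemma sum_odd_square_power_diff_inverse:
  fixes z :: complex
  assumes z: "z ^ m = 1" and z2: "z ^ 2 \<noteq> 1" and m: "m = 2 * h + 1"
  shows "(\<Sum>j<h. (z ^ (2 * j + 1) - inverse z ^ (2 * j + 1)) ^ 2) = - of_nat m"
proof -
  define g where "g n = (z ^ n - inverse z ^ n) ^ 2" for n
  have pairs: "(\<Sum>n<2 * k. g (Suc n)) = (\<Sum>j<k. g (2 * j + 1) + g (2 * j + 2))" for k
    by (induction k) (simp_all add: algebra_simps)
  have even_terms: "(\<Sum>j<h. g (2 * j + 2)) = (\<Sum>j<h. g (2 * j + 1))"
  proof -
    have "g (2 * j + 2) = g (2 * (h - Suc j) + 1)" if "j < h" for j
    proof -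
      have "2 * (h - Suc j) + 1 = m - (2 * j + 2)" and "2 * j + 2 \<le> m"
        using that m by auto
      then show ?thesis
        unfolding g_def using square_power_diff_inverse_reflect[OF z] by simp
    qed
    then have "(\<Sum>j<h. g (2 * j + 2)) = (\<Sum>j<h. g (2 * (h - Suc j) + 1))"
      by (intro sum.cong) auto
    also have "\<dots> = (\<Sum>j<h. g (2 * j + 1))"
      by (rule sum.nat_diff_reindex)
    finally show ?thesis .
  qed
  have "- 2 * of_nat m = (\<Sum>n<m. g n)"
    unfolding g_def using sum_square_power_diff_inverse[OF z z2] m by simp
  also have "\<dots> = g 0 + (\<Sum>n<2 * h. g (Suc n))"
    unfolding m Suc_eq_plus1[symmetric] by (rule sum.lessThan_Suc_shift)
  also have "\<dots> = (\<Sum>j<h. g (2 * j + 1)) + (\<Sum>j<h. g (2 * j + 2))"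
    unfolding pairs sum.distrib by (simp add: g_def)
  also have "\<dots> = 2 * (\<Sum>j<h. g (2 * j + 1))"
    unfolding even_terms by simp
  finally show ?thesis
    unfolding g_def by simp
qed

section \<open>The ring \<open>\<int>[g]\<close> of a root of unity\<close>

definition int_span_powers :: "nat \<Rightarrow> complex \<Rightarrow> complex set" where
  "int_span_powers N g = {x. \<exists>c::nat \<Rightarrow> int. x = (\<Sum>k<N. of_int (c k) * g ^ k)}"

lemma int_span_powers_intro: "x = (\<Sum>k<N. of_int (c k) * g ^ k) \<Longrightarrow> x \<in> int_span_powers N g"
  unfolding int_span_powers_def by blast

lemma int_span_powers_zero: "0 \<in> int_span_powers N g"
  by (rule int_span_powers_intro[where c = "\<lambda>_. 0"]) simp

lemma int_span_powers_add:
  assumes "x \<in> int_span_powers N g" "y \<in> int_span_powers N g"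
  shows "x + y \<in> int_span_powers N g"
proof -
  obtain a b where "x = (\<Sum>k<N. of_int (a k) * g ^ k)" "y = (\<Sum>k<N. of_int (b k) * g ^ k)"
    using assms unfolding int_span_powers_def by blast
  then have "x + y = (\<Sum>k<N. of_int (a k + b k) * g ^ k)"
    by (simp add: sum.distrib distrib_right)
  then show ?thesis
    by (rule int_span_powers_intro)
qed

lemma int_span_powers_of_int_mult:
  assumes "x \<in> int_span_powers N g"
  shows "of_int m * x \<in> int_span_powers N g"
proof -
  obtain a where "x = (\<Sum>k<N. of_int (a k) * g ^ k)"
    using assms unfolding int_span_powers_def by blast
  then have "of_int m * x = (\<Sum>k<N. of_int (m * a k) * g ^ k)"
    by (simp add: sum_distrib_left mult.assoc)
  then show ?thesis
    by (rule int_span_powers_intro)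
qed

lemma int_span_powers_uminus: "x \<in> int_span_powers N g \<Longrightarrow> - x \<in> int_span_powers N g"
  using int_span_powers_of_int_mult[of x N g "-1"] by simp

lemma int_span_powers_sum:
  "(\<And>i. i \<in> S \<Longrightarrow> f i \<in> int_span_powers N g) \<Longrightarrow> sum f S \<in> int_span_powers N g"
  by (induction S rule: infinite_finite_induct) (auto intro: int_span_powers_zero int_span_powers_add)

lemma int_span_powers_subset_rat_field_gen: "int_span_powers N g \<subseteq> rat_field_gen g"
proof
  fix x
  assume "x \<in> int_span_powers N g"
  then obtain c where x: "x = (\<Sum>k<N. of_int (c k) * g ^ k)"
    unfolding int_span_powers_def by blast
  have "poly (map_poly of_rat (\<Sum>k<n. monom (of_int (c k)) k)) g = (\<Sum>k<n. of_int (c k) * g ^ k)" for n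
    by (induction n) (simp_all add: of_rat_hom.map_poly_hom_add map_poly_monom poly_monom)
  then have "poly (map_poly of_rat (\<Sum>k<N. monom (of_int (c k)) k)) g = x"
    unfolding x .
  then show "x \<in> rat_field_gen g"
    unfolding rat_field_gen_def by blast
qed

lemma algebraic_integer_if_eigenvalue_of_int_mat:
  fixes M :: "int mat"
  assumes "M \<in> carrier_mat n n" and "eigenvalue (of_int_hom.mat_hom M) x"
  shows "algebraic_integer x"
proof -
  have "of_int_hom.mat_hom M \<in> carrier_mat n n"
    using assms(1) by simp
  then have "poly (char_poly (of_int_hom.mat_hom M)) x = 0"
    using assms(2) eigenvalue_root_char_poly by blast
  then have "poly (map_poly of_int (char_poly M)) x = 0"
    using of_int_hom.char_poly_hom[OF assms(1)] by metis
  moreover have "lead_coeff (char_poly M) = 1"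
    using degree_monic_char_poly[OF assms(1)] by simp
  ultimately show ?thesis
    unfolding algebraic_integer_def by blast
qed

definition span_unit :: "nat \<Rightarrow> complex \<Rightarrow> complex \<Rightarrow> bool" where
  "span_unit N g x \<longleftrightarrow> x \<in> int_span_powers N g \<and> x \<noteq> 0 \<and> inverse x \<in> int_span_powers N g"

locale root_of_unity =
  fixes N :: nat and g :: complex
  assumes power_N: "g ^ N = 1" and N_pos: "N > 0"
begin

lemma int_span_powers_one: "1 \<in> int_span_powers N g"
proof -
  have "(\<Sum>k<N. of_int (if k = 0 then 1 else 0) * g ^ k) = (\<Sum>k<N. if k = 0 then (1::complex) else 0)"
    by (rule sum.cong) auto
  also have "\<dots> = 1"
    using N_pos by simp
  finally show ?thesis
    by (intro int_span_powers_intro) (rule sym)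
qed

lemma int_span_powers_gen_mult:
  assumes "x \<in> int_span_powers N g"
  shows "g * x \<in> int_span_powers N g"
proof -
  obtain M where N: "N = Suc M"
    using N_pos gr0_implies_Suc by blast
  obtain a where x: "x = (\<Sum>k<N. of_int (a k) * g ^ k)"
    using assms unfolding int_span_powers_def by blast
  define c where "c k = (if k = 0 then a M else a (k - 1))" for k
  have "g * x = (\<Sum>k<M. of_int (a k) * g ^ Suc k) + of_int (a M) * g ^ N"
    unfolding x N by (simp add: sum_distrib_left algebra_simps)
  also have "\<dots> = (\<Sum>k<Suc M. of_int (c k) * g ^ k)"
    unfolding power_N by (subst sum.lessThan_Suc_shift) (simp add: c_def)
  finally show ?thesis
    unfolding N by (rule int_span_powers_intro)
qed

lemma int_span_powers_gen_power_mult: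
  "x \<in> int_span_powers N g \<Longrightarrow> g ^ j * x \<in> int_span_powers N g"
  by (induction j) (auto simp: mult.assoc intro: int_span_powers_gen_mult)

lemma int_span_powers_gen_power: "g ^ j \<in> int_span_powers N g"
  using int_span_powers_gen_power_mult[OF int_span_powers_one] by simp

lemma int_span_powers_mult:
  assumes "x \<in> int_span_powers N g" "y \<in> int_span_powers N g"
  shows "x * y \<in> int_span_powers N g"
proof -
  obtain b where "y = (\<Sum>k<N. of_int (b k) * g ^ k)"
    using assms(2) unfolding int_span_powers_def by blast
  then have "x * y = (\<Sum>k<N. of_int (b k) * (g ^ k * x))"
    by (simp add: sum_distrib_left algebra_simps)
  also have "\<dots> \<in> int_span_powers N g"
    using assms(1) by (intro int_span_powers_sum int_span_powers_of_int_mult int_span_powers_gen_power_mult)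
  finally show ?thesis .
qed

lemma int_span_powers_power: "x \<in> int_span_powers N g \<Longrightarrow> x ^ n \<in> int_span_powers N g"
  by (induction n) (auto intro: int_span_powers_mult int_span_powers_one)

text \<open>Multiplication by \<open>x\<close> maps \<open>\<int>[g]\<close> into itself, so \<open>x\<close> is an eigenvalue of the
  integer matrix of this map on the spanning vector \<open>(1, g, \<dots>, g^(N - 1))\<close>.\<close>

lemma algebraic_integer_if_int_span_powers:
  assumes x: "x \<in> int_span_powers N g"
  shows "algebraic_integer x"
proof -
  have "\<forall>j. \<exists>c. x * g ^ j = (\<Sum>k<N. of_int (c k) * g ^ k)"
    using int_span_powers_gen_power_mult[OF x] unfolding int_span_powers_def by (auto simp: mult.commute)
  then obtain C where C: "\<And>j. x * g ^ j = (\<Sum>k<N. of_int (C j k) * g ^ k)"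
    by metis
  define M :: "int mat" where "M = mat N N (\<lambda>(j, k). C j k)"
  define v :: "complex vec" where "v = vec N (\<lambda>k. g ^ k)"
  have "v $ 0 = 1"
    using N_pos by (simp add: v_def)
  then have "v \<noteq> 0\<^sub>v N"
    using N_pos by auto
  moreover have "of_int_hom.mat_hom M *\<^sub>v v = x \<cdot>\<^sub>v v"
  proof (rule eq_vecI)
    fix i
    assume "i < dim_vec (x \<cdot>\<^sub>v v)"
    then have i: "i < N"
      by (simp add: v_def)
    have "(of_int_hom.mat_hom M *\<^sub>v v) $ i = (\<Sum>k<N. of_int (C i k) * g ^ k)"
      using i by (simp add: M_def v_def mult_mat_vec_def scalar_prod_def lessThan_atLeast0)
    also have "\<dots> = (x \<cdot>\<^sub>v v) $ i"
      using i C[of i] by (simp add: v_def)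
    finally show "(of_int_hom.mat_hom M *\<^sub>v v) $ i = (x \<cdot>\<^sub>v v) $ i" .
  qed (simp add: M_def v_def)
  ultimately have "eigenvector (of_int_hom.mat_hom M) v x"
    unfolding eigenvector_def by (simp add: M_def v_def)
  then have "eigenvalue (of_int_hom.mat_hom M) x"
    unfolding eigenvalue_def by blast
  moreover have "M \<in> carrier_mat N N"
    by (simp add: M_def)
  ultimately show ?thesis
    using algebraic_integer_if_eigenvalue_of_int_mat by blast
qed

lemma span_unit_mult: "span_unit N g x \<Longrightarrow> span_unit N g y \<Longrightarrow> span_unit N g (x * y)"
  unfolding span_unit_def by (auto intro: int_span_powers_mult simp: inverse_mult_distrib)

lemma span_unit_inverse: "span_unit N g x \<Longrightarrow> span_unit N g (inverse x)"
  unfolding span_unit_def by auto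

lemma span_unit_divide: "span_unit N g x \<Longrightarrow> span_unit N g y \<Longrightarrow> span_unit N g (x / y)"
  unfolding divide_inverse by (intro span_unit_mult span_unit_inverse)

lemma span_unit_one: "span_unit N g 1"
  unfolding span_unit_def using int_span_powers_one by simp

lemma span_unit_power: "span_unit N g x \<Longrightarrow> span_unit N g (x ^ n)"
  by (induction n) (auto intro: span_unit_mult span_unit_one)

lemma span_unit_prod: "(\<And>i. i \<in> S \<Longrightarrow> span_unit N g (f i)) \<Longrightarrow> span_unit N g (prod f S)"
  by (induction S rule: infinite_finite_induct) (auto intro: span_unit_one span_unit_mult)

lemma span_unit_if_square_eq:
  assumes "span_unit N g x" and "y ^ 2 = x ^ 2"
  shows "span_unit N g y"
proof -
  have "y = x \<or> y = - x"
    using assms(2) by (simp add: power2_eq_iff)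
  then show ?thesis
    using assms(1) int_span_powers_uminus unfolding span_unit_def by auto
qed

lemma span_unit_root_of_unity:
  assumes "x \<in> int_span_powers N g" and "x ^ n = 1" and "n > 0"
  shows "span_unit N g x"
proof -
  have "x * x ^ (n - 1) = x ^ n"
    using assms(3) by (cases n) auto
  then have "x * x ^ (n - 1) = 1"
    using assms(2) by simp
  then have "inverse x = x ^ (n - 1)"
    by (rule inverse_unique)
  then show ?thesis
    unfolding span_unit_def using assms by (auto simp: int_span_powers_power zero_power)
qed

lemma span_unit_gen_power: "span_unit N g (g ^ j)"
  using span_unit_root_of_unity[OF int_span_powers_gen_power[of 1] _ N_pos] power_N
  by (intro span_unit_power) simp

text \<open>The cyclotomic units: both \<open>(1 - w\<^sup>k) / (1 - w)\<close> and its inverse are geometric sums in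
  a power of \<open>w\<close>, because \<open>w\<close> is itself a power of \<open>w\<^sup>k\<close>.\<close>

lemma span_unit_cyclotomic:
  assumes w: "w \<in> int_span_powers N g" and wq: "w ^ q = 1" and q: "prime q"
    and prim: "\<And>k. 0 < k \<Longrightarrow> k < q \<Longrightarrow> w ^ k \<noteq> 1" and k: "0 < k" "k < q"
  shows "span_unit N g ((1 - w ^ k) / (1 - w))"
proof -
  have w1: "1 - w \<noteq> 0"
    using prim[of 1] k by simp
  have wk1: "1 - w ^ k \<noteq> 0"
    using prim[OF k] by simp
  have "(1 - w ^ k) / (1 - w) = (\<Sum>i<k. w ^ i)"
    using w1 by (simp add: one_diff_power_eq[of w k])
  also have "\<dots> \<in> int_span_powers N g"
    by (intro int_span_powers_sum int_span_powers_power w)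
  finally have unit: "(1 - w ^ k) / (1 - w) \<in> int_span_powers N g" .
  have "coprime q k"
    using prime_imp_coprime[OF q] k by (simp add: nat_dvd_not_less)
  then have "gcd k q = 1"
    by (simp add: coprime_iff_gcd_eq_1 gcd.commute)
  then obtain x y where xy: "k * x = q * y + 1"
    using bezout_nat[of k q] k by auto
  have "(w ^ k) ^ x = w"
    using wq by (simp add: xy flip: power_mult) (simp add: power_add power_mult)
  then have "(1 - w) / (1 - w ^ k) = (\<Sum>i<x. (w ^ k) ^ i)"
    using wk1 one_diff_power_eq[of "w ^ k" x] by simp
  also have "\<dots> \<in> int_span_powers N g"
    by (intro int_span_powers_sum int_span_powers_power w)
  finally have "inverse ((1 - w ^ k) / (1 - w)) \<in> int_span_powers N g"
    by simp
  with unit show ?thesis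
    unfolding span_unit_def using w1 wk1 by simp
qed

lemma of_nat_eq_sign_times_unit_ratio_square:
  assumes w: "w \<in> int_span_powers N g" and wq: "w ^ q = 1" and q: "prime q" and qh: "q = 2 * h + 1"
    and prim: "\<And>k. 0 < k \<Longrightarrow> k < q \<Longrightarrow> w ^ k \<noteq> 1"
  shows "\<exists>F T. span_unit N g F \<and> span_unit N g T \<and> of_nat q = (-1) ^ h * ((1 - w) ^ h * F) ^ 2 / T ^ 2"
proof -
  have a0: "1 - w \<noteq> 0"
    using prim[of 1] prime_gt_1_nat[OF q] by simp
  define F where "F = (\<Prod>k\<in>{1..h}. (1 - w ^ k) / (1 - w))"
  have "span_unit N g F"
    unfolding F_def by (intro span_unit_prod span_unit_cyclotomic[OF w wq q prim]) (use qh in auto)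
  have "(\<Prod>k\<in>{1..h}. 1 - w ^ k) = (\<Prod>k\<in>{1..h}. (1 - w) * ((1 - w ^ k) / (1 - w)))"
    by (rule prod.cong) (use a0 in auto)
  also have "\<dots> = (1 - w) ^ h * F"
    unfolding prod.distrib F_def by simp
  finally have prod_F: "(\<Prod>k\<in>{1..h}. 1 - w ^ k) = (1 - w) ^ h * F" .
  define T where "T = (\<Prod>k\<in>{1..h}. (w ^ (h + 1)) ^ k)"
  have "span_unit N g T"
    unfolding T_def using span_unit_root_of_unity[OF w wq] qh by (intro span_unit_prod span_unit_power) simp
  have "(w ^ (h + 1)) ^ 2 = w ^ (q + 1)"
    unfolding qh power_mult[symmetric] by (simp add: algebra_simps)
  then have half: "(w ^ (h + 1)) ^ 2 = w"
    using wq by simp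
  have "T ^ 2 = (\<Prod>k\<in>{1..h}. ((w ^ (h + 1)) ^ 2) ^ k)"
    unfolding T_def prod_power_distrib
    by (rule prod.cong) (simp_all flip: power_mult add: mult.commute)
  then have "T ^ 2 = (\<Prod>k\<in>{1..h}. w ^ k)"
    unfolding half .
  then have "of_nat q = (-1) ^ h * ((1 - w) ^ h * F) ^ 2 / T ^ 2"
    using of_nat_eq_prod_one_minus_roots_square[OF qh wq prim] prod_F by simp
  with \<open>span_unit N g F\<close> \<open>span_unit N g T\<close> show ?thesis
    by blast
qed

lemma cyclotomic_ratio_eq_sign_times_unit_square:
  assumes w: "w \<in> int_span_powers N g" and wq: "w ^ q = 1" and q: "prime q" "odd q"
    and prim: "\<And>k. 0 < k \<Longrightarrow> k < q \<Longrightarrow> w ^ k \<noteq> 1"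
  shows "\<exists>u. span_unit N g u \<and>
    - of_nat q / ((w - inverse w) ^ 2 * (1 - w) ^ (q - 3)) = (-1) ^ ((q + 1) div 2) * u ^ 2"
proof -
  define h where "h = (q - 1) div 2"
  have "q \<ge> 2" "q \<noteq> 2"
    using q prime_ge_2_nat by auto
  then have qh: "q = 2 * h + 1" and h: "h \<ge> 1"
    using q(2) unfolding h_def by presburger+
  obtain F T where FU: "span_unit N g F" and TU: "span_unit N g T"
    and q_eq: "of_nat q = (-1) ^ h * ((1 - w) ^ h * F) ^ 2 / T ^ 2"
    using of_nat_eq_sign_times_unit_ratio_square[OF w wq q(1) qh prim] by blast
  have w0: "w \<noteq> 0" and a0: "1 - w \<noteq> 0"
    using wq prim[of 1] qh h by (auto simp: zero_power)
  define E where "E = (1 - w ^ 2) / (1 - w)"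
  have EU: "span_unit N g E"
    unfolding E_def using span_unit_cyclotomic[OF w wq q(1) prim, of 2] qh h by simp
  have diff_inverse: "w - inverse w = - (1 - w) * E / w"
    unfolding E_def using a0 w0 by (simp add: field_simps power2_eq_square)
  define u where "u = F * w / (T * E)"
  have "span_unit N g u"
    unfolding u_def using span_unit_root_of_unity[OF w wq] qh
    by (intro span_unit_divide span_unit_mult FU TU EU) simp_all
  moreover have "- of_nat q / ((w - inverse w) ^ 2 * (1 - w) ^ (q - 3)) = (-1) ^ ((q + 1) div 2) * u ^ 2"
  proof -
    have field_identity: "- (s * (a * b * F) ^ 2 / T ^ 2) / ((- a * E / w) ^ 2 * b ^ 2) = - s * (F * w / (T * E)) ^ 2"
      if "a \<noteq> 0" "b \<noteq> 0" "w \<noteq> 0" "T \<noteq> 0" "E \<noteq> 0" for a b s F T E w :: complex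
      using that by (simp add: field_simps power2_eq_square)
    have "T \<noteq> 0" "E \<noteq> 0"
      using TU EU unfolding span_unit_def by auto
    have "q - 3 = (h - 1) * 2" and sign: "(q + 1) div 2 = Suc h"
      using qh h by simp_all
    then have "(1 - w) ^ (q - 3) = ((1 - w) ^ (h - 1)) ^ 2"
      by (simp only: power_mult)
    moreover have "(1 - w) ^ h = (1 - w) * (1 - w) ^ (h - 1)"
      using h by (simp flip: power_Suc)
    ultimately have "- of_nat q / ((w - inverse w) ^ 2 * (1 - w) ^ (q - 3))
        = - ((-1) ^ h * ((1 - w) * (1 - w) ^ (h - 1) * F) ^ 2 / T ^ 2) / ((- (1 - w) * E / w) ^ 2 * ((1 - w) ^ (h - 1)) ^ 2)"
      by (simp only: q_eq diff_inverse)
    also have "\<dots> = - ((-1) ^ h) * u ^ 2"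
      unfolding u_def using a0 w0 \<open>T \<noteq> 0\<close> \<open>E \<noteq> 0\<close> by (intro field_identity) simp_all
    finally show ?thesis
      unfolding sign by simp
  qed
  ultimately show ?thesis
    by blast
qed

end

section \<open>The BHMV invariant at \<open>A = A\<^sub>p\<close>\<close>

lemma alpha_p_power: "alpha_p p ^ k = cis (real k * (2 * pi / (4 * real p)))"
  by (simp add: alpha_p_def DeMoivre)

lemma alpha_p_power_4p: "p > 0 \<Longrightarrow> alpha_p p ^ (4 * p) = 1"
  unfolding alpha_p_power by simp

lemma alpha_p_power_p: "p > 0 \<Longrightarrow> alpha_p p ^ p = \<i>"
  unfolding alpha_p_power by (simp add: field_simps)

lemma alpha_p_power_4_power_eq_1_iff: "p > 0 \<Longrightarrow> (alpha_p p ^ 4) ^ k = 1 \<longleftrightarrow> p dvd k"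
proof -
  assume p: "p > 0"
  have "alpha_p p ^ 4 = cis (2 * pi / real p)"
    using p unfolding alpha_p_power by (simp add: field_simps)
  then show ?thesis
    using cis_2pi_div_power_eq_1_iff[OF p] by simp
qed

lemma neg_alpha_p_power_4_power_eq_1_iff:
  assumes "odd q" and p: "p = 2 * q"
  shows "(- (alpha_p p ^ 4)) ^ k = 1 \<longleftrightarrow> q dvd k"
proof
  have "p > 0"
    using assms odd_pos by auto
  assume neg_k: "(- (alpha_p p ^ 4)) ^ k = 1"
  have "(alpha_p p ^ 4) ^ (2 * k) = ((- (alpha_p p ^ 4)) ^ k) ^ 2"
    by (simp only: power_even_eq[symmetric]) simp
  also have "\<dots> = 1"
    unfolding neg_k by simp
  finally have "(alpha_p p ^ 4) ^ (2 * k) = 1" .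
  then have "p dvd 2 * k"
    using alpha_p_power_4_power_eq_1_iff[OF \<open>p > 0\<close>, of "2 * k"] by simp
  then show "q dvd k"
    using p by simp
next
  assume "q dvd k"
  then obtain m where k: "k = q * m"
    by blast
  have "q > 0"
    using assms(1) odd_pos by blast
  then have "real (4 * q) * (2 * pi / (4 * real p)) = pi"
    using p by (simp add: field_simps)
  then have "alpha_p p ^ (4 * q) = -1"
    unfolding alpha_p_power by simp
  then have "(alpha_p p ^ 4) ^ q = -1"
    by (simp only: power_mult)
  then have "(- (alpha_p p ^ 4)) ^ q = 1"
    using assms(1) by (simp add: power_minus')
  then show "(- (alpha_p p ^ 4)) ^ k = 1"
    unfolding k power_mult by simp
qed

lemma A_p_square: "A_p p ^ 2 = alpha_p p ^ 4"
  unfolding A_p_def by (simp flip: power_mult)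

lemma root_of_unity_gen_p: "p > 0 \<Longrightarrow> root_of_unity (4 * p) (gen_p p)"
proof -
  assume p: "p > 0"
  have "A_p p ^ (4 * p) = (alpha_p p ^ (4 * p)) ^ 2"
    unfolding A_p_def by (simp flip: power_mult add: mult.commute)
  then show ?thesis
    using p alpha_p_power_4p[OF p] by unfold_locales (simp_all add: gen_p_def)
qed

lemma alpha_p_power_4_in_int_span_powers:
  assumes "p > 0"
  shows "alpha_p p ^ 4 \<in> int_span_powers (4 * p) (gen_p p)"
proof -
  interpret root_of_unity "4 * p" "gen_p p"
    using root_of_unity_gen_p[OF assms] .
  have "alpha_p p ^ 4 = gen_p p ^ 2 \<or> alpha_p p ^ 4 = gen_p p ^ 4"
    by (cases "p mod 4 = 3") (simp_all add: gen_p_def A_p_square)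
  then show ?thesis
    using int_span_powers_gen_power by auto
qed

text \<open>For \<open>p \<equiv> 3 (mod 4)\<close> the field \<open>\<rat>(A\<^sub>p) = \<rat>(\<zeta>\<^sub>p)\<close> does not contain \<open>\<i>\<close>, so only even powers
  of \<open>-1\<close> are available; otherwise \<open>(-1)^k = (\<alpha>\<^sub>p^(p k))\<^sup>2\<close>.\<close>

lemma sign_eq_span_unit_square:
  assumes "p > 0" and "p mod 4 = 3 \<Longrightarrow> even k"
  shows "\<exists>c. span_unit (4 * p) (gen_p p) c \<and> c ^ 2 = (-1) ^ k"
proof -
  interpret root_of_unity "4 * p" "gen_p p"
    using root_of_unity_gen_p[OF assms(1)] .
  show ?thesis
  proof (cases "p mod 4 = 3")
    case True
    then show ?thesis
      using assms(2) span_unit_one by auto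
  next
    case False
    have "(gen_p p ^ (p * k)) ^ 2 = ((alpha_p p ^ p) ^ 2) ^ k"
      using False unfolding gen_p_def by (simp flip: power_mult add: mult_ac)
    then have "(gen_p p ^ (p * k)) ^ 2 = (-1) ^ k"
      using alpha_p_power_p[OF assms(1)] by simp
    then show ?thesis
      using span_unit_gen_power by blast
  qed
qed

lemma assoc_p_if_span_unit:
  assumes "p > 0" and unit: "span_unit (4 * p) (gen_p p) (D / X)"
  shows "assoc_p p D X"
proof -
  interpret root_of_unity "4 * p" "gen_p p"
    using root_of_unity_gen_p[OF assms(1)] .
  have "int_span_powers (4 * p) (gen_p p) \<subseteq> O_p p"
    using int_span_powers_subset_rat_field_gen algebraic_integer_if_int_span_powers
    unfolding O_p_def by blast
  moreover have "X / D = inverse (D / X)"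
    by simp
  ultimately show ?thesis
    using unit unfolding assoc_p_def span_unit_def by auto
qed

lemma assoc_p_if_square_eq_cyclotomic_ratio:
  assumes "p > 0" and w: "w \<in> int_span_powers (4 * p) (gen_p p)" and "w ^ q = 1" "prime q" "odd q"
    and "\<And>k. 0 < k \<Longrightarrow> k < q \<Longrightarrow> w ^ k \<noteq> 1"
    and "p mod 4 = 3 \<Longrightarrow> even ((q + 1) div 2)"
    and ratio: "(D / X) ^ 2 = - of_nat q / ((w - inverse w) ^ 2 * (1 - w) ^ (q - 3))"
  shows "assoc_p p D X"
proof -
  interpret root_of_unity "4 * p" "gen_p p"
    using root_of_unity_gen_p[OF assms(1)] .
  obtain u where u: "span_unit (4 * p) (gen_p p) u"
    and u_eq: "- of_nat q / ((w - inverse w) ^ 2 * (1 - w) ^ (q - 3)) = (-1) ^ ((q + 1) div 2) * u ^ 2"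
    using cyclotomic_ratio_eq_sign_times_unit_square[OF assms(2-6)] by blast
  obtain c where c: "span_unit (4 * p) (gen_p p) c" and c_eq: "c ^ 2 = (-1) ^ ((q + 1) div 2)"
    using sign_eq_span_unit_square[OF assms(1,7)] by blast
  have "(D / X) ^ 2 = (c * u) ^ 2"
    unfolding ratio u_eq c_eq[symmetric] by (simp add: power_mult_distrib)
  then have "span_unit (4 * p) (gen_p p) (D / X)"
    using span_unit_if_square_eq span_unit_mult[OF c u] by blast
  then show ?thesis
    by (rule assoc_p_if_span_unit[OF assms(1)])
qed

lemma bracket_e_square:
  assumes z: "z = alpha_p p ^ 4"
  shows "bracket_e p i ^ 2 = (z ^ (i + 1) - inverse z ^ (i + 1)) ^ 2 / (z - inverse z) ^ 2"
proof -
  have A: "A_p p ^ (2 * n) = z ^ n" for n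
    unfolding z power_mult A_p_square ..
  have A_inverse: "inverse (A_p p) ^ (2 * n) = inverse z ^ n" for n
    using A[of n] by (simp add: power_inverse)
  have "qint p n = (z ^ n - inverse z ^ n) / (z - inverse z)" for n
    unfolding qint_def using A[of n] A_inverse[of n] A[of 1] A_inverse[of 1] by simp
  then show ?thesis
    unfolding bracket_e_def by (simp add: power_mult_distrib power_divide flip: power_mult)
qed

lemma D_sq_odd:
  assumes "odd p" "p \<ge> 3" and z: "z = alpha_p p ^ 4"
  shows "D_sq p = - of_nat p / (z - inverse z) ^ 2"
proof -
  define h where "h = p div 2"
  have p: "p = 2 * h + 1"
    using assms(1) unfolding h_def by presburger
  have "p > 0"
    using assms by simp
  have "z ^ p = 1" and "z ^ 2 \<noteq> 1"
    using alpha_p_power_4_power_eq_1_iff[OF \<open>p > 0\<close>, of p] alpha_p_power_4_power_eq_1_iff[OF \<open>p > 0\<close>, of 2] assms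
    by (auto simp: z dest: dvd_imp_le)
  note odd_sum = sum_odd_square_power_diff_inverse[OF this p]
  have colours: "colours p = (\<lambda>j. 2 * j) ` {..<h}"
  proof (intro Set.set_eqI iffI)
    fix i
    assume "i \<in> colours p"
    then have "even i" "i \<le> p - 3"
      using assms(1) by (auto simp: colours_def)
    moreover have "i div 2 < h"
      using \<open>i \<le> p - 3\<close> p assms(2) by linarith
    ultimately show "i \<in> (\<lambda>j. 2 * j) ` {..<h}"
      by (intro image_eqI[of _ _ "i div 2"]) auto
  next
    fix i
    assume "i \<in> (\<lambda>j. 2 * j) ` {..<h}"
    then show "i \<in> colours p"
      using assms(1) p by (auto simp: colours_def)
  qed
  have "D_sq p = (\<Sum>i\<in>colours p. (z ^ (i + 1) - inverse z ^ (i + 1)) ^ 2) / (z - inverse z) ^ 2"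
    unfolding D_sq_def bracket_e_square[OF z] by (simp add: sum_divide_distrib)
  also have "\<dots> = (\<Sum>j<h. (z ^ (2 * j + 1) - inverse z ^ (2 * j + 1)) ^ 2) / (z - inverse z) ^ 2"
    unfolding colours by (subst sum.reindex) (auto simp: inj_on_def)
  finally show ?thesis
    unfolding odd_sum .
qed

lemma D_sq_twice_odd:
  assumes "odd q" "q \<ge> 3" and p: "p = 2 * q" and w: "w = - (alpha_p p ^ 4)"
  shows "D_sq p = - 2 * of_nat q / (w - inverse w) ^ 2"
proof -
  have "w ^ q = 1" and "w ^ 2 \<noteq> 1"
    using neg_alpha_p_power_4_power_eq_1_iff[OF assms(1) p, of q] neg_alpha_p_power_4_power_eq_1_iff[OF assms(1) p, of 2] assms
    by (auto simp: w dest: dvd_imp_le)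
  note all_sum = sum_square_power_diff_inverse[OF this]
  have sign: "((- w) ^ n - inverse (- w) ^ n) ^ 2 = (w ^ n - inverse w ^ n) ^ 2" for n
  proof -
    have "(- w) ^ n - inverse (- w) ^ n = (-1) ^ n * (w ^ n - inverse w ^ n)"
      by (simp add: power_minus' algebra_simps)
    then show ?thesis
      by (simp add: power_mult_distrib flip: power_mult)
  qed
  have z: "- w = alpha_p p ^ 4"
    using w by simp
  have "colours p = {..<q - 1}"
    unfolding colours_def using p assms(2) by auto
  then have "D_sq p = (\<Sum>i<q - 1. ((- w) ^ (i + 1) - inverse (- w) ^ (i + 1)) ^ 2) / (- w - inverse (- w)) ^ 2"
    unfolding D_sq_def bracket_e_square[OF z] by (simp only: sum_divide_distrib)
  also have "\<dots> = (\<Sum>i<q - 1. (w ^ Suc i - inverse w ^ Suc i) ^ 2) / (w - inverse w) ^ 2"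
    using sign[of 1] by (simp only: sign Suc_eq_plus1 power_one_right)
  also have "(\<Sum>i<q - 1. (w ^ Suc i - inverse w ^ Suc i) ^ 2) = (\<Sum>n<q. (w ^ n - inverse w ^ n) ^ 2)"
    using assms(2) sum.lessThan_Suc_shift[of "\<lambda>n. (w ^ n - inverse w ^ n) ^ 2" "q - 1"] by simp
  finally show ?thesis
    using all_sum assms(2) by simp
qed

lemma assoc_p_odd_prime:
  assumes p: "prime p" "odd p" and D: "D ^ 2 = D_sq p"
  shows "assoc_p p D ((1 - A_p p ^ 2) ^ ((p - 3) div 2))"
proof -
  have "p \<ge> 3"
    using p prime_ge_2_nat[OF p(1)] by presburger
  then have "p > 0"
    by simp
  define z where "z = alpha_p p ^ 4"
  have root: "z ^ k = 1 \<longleftrightarrow> p dvd k" for k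
    unfolding z_def by (rule alpha_p_power_4_power_eq_1_iff[OF \<open>p > 0\<close>])
  have "(1 - z) ^ (p - 3) = ((1 - z) ^ ((p - 3) div 2)) ^ 2"
    using p(2) by (simp flip: power_mult)
  then have "(D / (1 - z) ^ ((p - 3) div 2)) ^ 2 = - of_nat p / ((z - inverse z) ^ 2 * (1 - z) ^ (p - 3))"
    unfolding power_divide D D_sq_odd[OF p(2) \<open>p \<ge> 3\<close> z_def] by simp
  moreover have "z \<in> int_span_powers (4 * p) (gen_p p)"
    unfolding z_def by (rule alpha_p_power_4_in_int_span_powers[OF \<open>p > 0\<close>])
  moreover have "p mod 4 = 3 \<Longrightarrow> even ((p + 1) div 2)"
    by presburger
  moreover have "z ^ p = 1" and "\<And>k. 0 < k \<Longrightarrow> k < p \<Longrightarrow> z ^ k \<noteq> 1"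
    using root by (auto dest: dvd_imp_le)
  ultimately have "assoc_p p D ((1 - z) ^ ((p - 3) div 2))"
    using assoc_p_if_square_eq_cyclotomic_ratio[OF \<open>p > 0\<close> _ _ p] by blast
  then show ?thesis
    by (simp add: z_def A_p_square)
qed

lemma assoc_p_twice_odd_prime:
  assumes q: "prime q" "odd q" and p: "p = 2 * q" and D: "D ^ 2 = D_sq p"
  shows "assoc_p p D (complex_of_real (sqrt 2) * (1 + alpha_p p ^ 4) ^ ((p div 2 - 3) div 2))"
proof -
  have "q \<ge> 3"
    using q prime_ge_2_nat[OF q(1)] by presburger
  then have "p > 0"
    using p by simp
  define w where "w = - (alpha_p p ^ 4)"
  have root: "w ^ k = 1 \<longleftrightarrow> q dvd k" for k
    unfolding w_def by (rule neg_alpha_p_power_4_power_eq_1_iff[OF q(2) p])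
  define X where "X = (1 - w) ^ ((q - 3) div 2)"
  have "(1 - w) ^ (q - 3) = X ^ 2"
    unfolding X_def using q(2) by (simp flip: power_mult)
  moreover have "complex_of_real (sqrt 2) ^ 2 = 2"
    by (simp flip: of_real_power)
  ultimately have "(D / (complex_of_real (sqrt 2) * X)) ^ 2 = - of_nat q / ((w - inverse w) ^ 2 * (1 - w) ^ (q - 3))"
    unfolding power_divide power_mult_distrib D D_sq_twice_odd[OF q(2) \<open>q \<ge> 3\<close> p w_def] by simp
  moreover have "w \<in> int_span_powers (4 * p) (gen_p p)"
    unfolding w_def by (intro int_span_powers_uminus alpha_p_power_4_in_int_span_powers \<open>p > 0\<close>)
  moreover have "p mod 4 \<noteq> 3"
    using p by presburger
  moreover have "w ^ q = 1" and "\<And>k. 0 < k \<Longrightarrow> k < q \<Longrightarrow> w ^ k \<noteq> 1"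
    using root by (auto dest: dvd_imp_le)
  ultimately have "assoc_p p D (complex_of_real (sqrt 2) * X)"
    using assoc_p_if_square_eq_cyclotomic_ratio[OF \<open>p > 0\<close> _ _ q] by blast
  then show ?thesis
    by (simp add: X_def w_def p)
qed

theorem lemma2p4:
  fixes p :: nat and D :: complex
  assumes D: "D^2 = D_sq p"
  shows "(prime p \<and> odd p \<longrightarrow>
            assoc_p p D ((1 - (A_p p)^2) ^ ((p - 3) div 2)))
       \<and> ((\<exists>q::nat. prime q \<and> odd q \<and> p = 2 * q) \<longrightarrow>
            assoc_p p D (complex_of_real (sqrt 2) * (1 + (alpha_p p)^4) ^ ((p div 2 - 3) div 2)))"
  using assoc_p_odd_prime[OF _ _ D] assoc_p_twice_odd_prime[OF _ _ _ D] by blast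

end
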